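(* Let $V_A,V_B\subseteq\mathbb{R}^d$ be $k$-dimensional subspaces whose principal angles all equal a common $\theta\in[0,\pi/2]$, with principal vectors $(u_i,v_i)$, and let $w\in\mathbb{R}^d$, $\|w\|=1$, satisfy $\langle w,u_i\rangle=\langle w,v_i\rangle=\alpha$ for all $i=1,\dots,k$. Then $$\eta(V_A,V_B,w) = \alpha\sqrt{k}\,|\tan(\theta/2)|,$$ and the debate advantage $\Delta = \sqrt{(K_A^* )^2+\eta^2}-K_A^*$ (where $K_A^*=\|\Pi_{V_A}w\|$) behaves as $\Delta \sim k\alpha^2\tan^2(\theta/2)/(2K_A^* )$ for small $\theta$ and as $\Delta\sim \alpha\sqrt{k}\tan(\theta/2)$ for large $\theta$.
   Context: Principal angles $\theta_i$ and principal vectors $(u_i,v_i)$: $\cos\theta_i=\max\{\langle u,v\rangle: u\in V_A,\|u\|=1,u\perp u_1..u_{i-1};\ v\in V_B,\|v\|=1,v\perp v_1..v_{i-1}\}$, maximizers $(u_i,v_i)$ with $\langle u_i,v_j\rangle=\cos\theta_i\delta_{ij}$. For $\theta_i>0$, $\tilde v_i=(v_i-\cos\theta_iu_i)/\sin\theta_i$, and the private information value is $\eta(V_A,V_B,w)=\sqrt{\sum_{i:\theta_i>0}\langle w,\tilde v_i\rangle^2}$. "Small $\theta$" refers to the regime $\eta\ll K_A^*$ and "large $\theta$" to the regime $\eta\gg K_A^*$. *)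

theory Defs
  imports "HOL-Analysis.Analysis"
begin

definition principal_vectors ::
  "('a::euclidean_space) set \<Rightarrow> 'a set \<Rightarrow> nat \<Rightarrow> (nat \<Rightarrow> real) \<Rightarrow> (nat \<Rightarrow> 'a) \<Rightarrow> (nat \<Rightarrow> 'a) \<Rightarrow> bool"
where
  "principal_vectors VA VB k th u v \<longleftrightarrow>
     (\<forall>i<k. th i \<in> {0..pi/2} \<and> u i \<in> VA \<and> v i \<in> VB \<and> norm (u i) = 1 \<and> norm (v i) = 1 \<and>
        (\<forall>j<i. u i \<bullet> u j = 0 \<and> v i \<bullet> v j = 0) \<and>
        cos (th i) = u i \<bullet> v i \<and>
        (\<forall>x y. x \<in> VA \<and> y \<in> VB \<and> norm x = 1 \<and> norm y = 1 \<and>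
               (\<forall>j<i. x \<bullet> u j = 0 \<and> y \<bullet> v j = 0) \<longrightarrow> x \<bullet> y \<le> cos (th i))) \<and>
     (\<forall>i<k. \<forall>j<k. u i \<bullet> v j = (if i = j then cos (th i) else 0))"

definition eta_val :: "nat \<Rightarrow> (nat \<Rightarrow> real) \<Rightarrow> (nat \<Rightarrow> 'a::euclidean_space) \<Rightarrow> (nat \<Rightarrow> 'a) \<Rightarrow> 'a \<Rightarrow> real"
where
  "eta_val k th u v w =
     sqrt (\<Sum>i\<in>{i. i < k \<and> th i > 0}.
             (w \<bullet> ((1 / sin (th i)) *\<^sub>R (v i - cos (th i) *\<^sub>R u i)))\<^sup>2)"

definition orth_proj :: "('a::euclidean_space) set \<Rightarrow> 'a \<Rightarrow> 'a" where
  "orth_proj V w = (THE p. p \<in> V \<and> (\<forall>x\<in>V. (w - p) \<bullet> x = 0))"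

definition K_star :: "('a::euclidean_space) set \<Rightarrow> 'a \<Rightarrow> real" where
  "K_star VA w = norm (orth_proj VA w)"

definition debate_adv :: "real \<Rightarrow> real \<Rightarrow> real" where
  "debate_adv K e = sqrt (K\<^sup>2 + e\<^sup>2) - K"

definition equal_angle_config ::
  "('a::euclidean_space) set \<Rightarrow> 'a set \<Rightarrow> nat \<Rightarrow> real \<Rightarrow> (nat \<Rightarrow> real) \<Rightarrow> (nat \<Rightarrow> 'a) \<Rightarrow> (nat \<Rightarrow> 'a) \<Rightarrow> 'a \<Rightarrow> real \<Rightarrow> bool"
where
  "equal_angle_config VA VB k th0 th u v w a \<longleftrightarrow>
     subspace VA \<and> subspace VB \<and> dim VA = k \<and> dim VB = k \<and>
     th0 \<in> {0..pi/2} \<and> principal_vectors VA VB k th u v \<and> (\<forall>i<k. th i = th0) \<and>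
     norm w = 1 \<and> (\<forall>i<k. w \<bullet> u i = a \<and> w \<bullet> v i = a)"

end

theory Submission
  imports Defs
begin

text \<open>When all principal angles equal \<theta> and w has the same inner product \<alpha> with every
  principal vector, each of the k summands of eta is the same number
  \<open>\<alpha> (1 - cos \<theta>) / sin \<theta> = \<alpha> tan (\<theta>/2)\<close>.  Both asymptotic statements only concern the
  scalar function \<open>\<Delta>(K, \<eta>) = sqrt (K\<^sup>2 + \<eta>\<^sup>2) - K\<close>: rationalising gives
  \<open>\<Delta> = \<eta>\<^sup>2 / (sqrt (K\<^sup>2 + \<eta>\<^sup>2) + K)\<close>, which is \<open>\<eta>\<^sup>2 / 2K\<close> up to relative error \<open>\<eta> / K\<close>,
  while \<open>\<eta> \<le> sqrt (K\<^sup>2 + \<eta>\<^sup>2) \<le> \<eta> + K\<close> makes \<open>\<Delta> = \<eta>\<close> up to relative error \<open>K / \<eta>\<close>.\<close>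

lemma tan_half_eq_one_minus_cos_div_sin:
  fixes t :: real
  assumes "sin t \<noteq> 0"
  shows "tan (t / 2) = (1 - cos t) / sin t"
proof -
  have "cos t + 1 \<noteq> 0"
  proof
    assume "cos t + 1 = 0"
    then have "cos t = -1" by simp
    then have "(sin t)\<^sup>2 = 0" using sin_squared_eq[of t] by simp
    with assms show False by simp
  qed
  moreover have "(sin t)\<^sup>2 = (1 - cos t) * (1 + cos t)"
    using sin_squared_eq[of t] by (simp add: algebra_simps power2_eq_square)
  ultimately have "sin t / (cos t + 1) = (1 - cos t) / sin t"
    using assms by (simp add: field_simps power2_eq_square)
  then show ?thesis
    using tan_half[of "t / 2"] by simp
qed

lemma tan_half_nonneg:
  fixes t :: real
  assumes "0 \<le> t" "t < pi"
  shows "0 \<le> tan (t / 2)"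
  using assms tan_gt_zero[of "t / 2"] by (cases "t = 0") auto

lemma eta_val_equal_angles:
  assumes "\<forall>i<k. th i = \<theta>" and "\<forall>i<k. w \<bullet> u i = \<alpha> \<and> w \<bullet> v i = \<alpha>"
    and "0 \<le> \<theta>" "\<theta> < pi"
  shows "eta_val k th u v w = \<bar>\<alpha>\<bar> * sqrt (real k) * tan (\<theta> / 2)"
proof (cases "\<theta> = 0")
  case True
  then have no_positive_angle: "{i. i < k \<and> th i > 0} = {}" using assms(1) by auto
  show ?thesis unfolding eta_val_def no_positive_angle using True by simp
next
  case False
  then have "sin \<theta> > 0" using assms(3,4) by (simp add: sin_gt_zero)
  have summand: "w \<bullet> ((1 / sin (th i)) *\<^sub>R (v i - cos (th i) *\<^sub>R u i)) = \<alpha> * tan (\<theta> / 2)"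
    if "i < k" for i
    using that assms(1,2) \<open>sin \<theta> > 0\<close>
    by (simp add: inner_diff_right tan_half_eq_one_minus_cos_div_sin field_simps)
  have "{i. i < k \<and> th i > 0} = {..<k}" using assms(1,3) False by auto
  then have "eta_val k th u v w = sqrt (real k * (\<alpha> * tan (\<theta> / 2))\<^sup>2)"
    unfolding eta_val_def using summand by simp
  also have "\<dots> = \<bar>\<alpha>\<bar> * sqrt (real k) * tan (\<theta> / 2)"
    using tan_half_nonneg[OF assms(3,4)] by (simp add: real_sqrt_mult abs_mult)
  finally show ?thesis .
qed

lemma eta_val_equal_angle_config:
  assumes "equal_angle_config VA VB k \<theta> th u v w \<alpha>"
  shows "eta_val k th u v w = \<bar>\<alpha>\<bar> * sqrt (real k) * tan (\<theta> / 2)"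
    and "0 \<le> tan (\<theta> / 2)"
proof -
  have "0 \<le> \<theta>" "\<theta> \<le> pi / 2"
    using assms by (auto simp: equal_angle_config_def)
  then have "0 \<le> \<theta>" "\<theta> < pi"
    using pi_gt_zero by linarith+
  then show "eta_val k th u v w = \<bar>\<alpha>\<bar> * sqrt (real k) * tan (\<theta> / 2)" "0 \<le> tan (\<theta> / 2)"
    using assms eta_val_equal_angles tan_half_nonneg by (auto simp: equal_angle_config_def)
qed

lemma sqrt_sum_squares_le_add:
  fixes x y :: real
  assumes "0 \<le> x" "0 \<le> y"
  shows "sqrt (x\<^sup>2 + y\<^sup>2) \<le> x + y"
  using assms by (intro real_le_lsqrt) (auto simp: power2_eq_square algebra_simps)

lemma debate_adv_small_eta:
  fixes K e \<epsilon> :: real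
  assumes "0 < K" "0 < e" "e < \<epsilon> * K"
  shows "\<bar>debate_adv K e / (e\<^sup>2 / (2 * K)) - 1\<bar> < \<epsilon>"
proof -
  define S where "S = sqrt (K\<^sup>2 + e\<^sup>2)"
  have "K < S" unfolding S_def using assms by (intro real_less_rsqrt) simp
  have "S \<le> K + e" unfolding S_def using assms by (intro sqrt_sum_squares_le_add) auto
  have rationalised: "e\<^sup>2 = (S - K) * (S + K)"
    unfolding S_def by (simp add: algebra_simps power2_eq_square[symmetric])
  have "debate_adv K e = S - K"
    by (simp add: debate_adv_def S_def)
  then have "debate_adv K e / (e\<^sup>2 / (2 * K)) = 2 * K / (S + K)"
    unfolding rationalised using assms \<open>K < S\<close> by simp
  then have "debate_adv K e / (e\<^sup>2 / (2 * K)) - 1 = - ((S - K) / (S + K))"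
    using assms \<open>K < S\<close> by (simp add: field_simps)
  moreover have "(S - K) / (S + K) \<le> e / (2 * K)"
    using assms \<open>K < S\<close> \<open>S \<le> K + e\<close> by (intro frac_le) auto
  moreover have "e / (2 * K) < \<epsilon>"
    using assms by (simp add: field_simps)
  moreover have "0 \<le> (S - K) / (S + K)"
    using assms \<open>K < S\<close> by simp
  ultimately show ?thesis by linarith
qed

lemma debate_adv_large_eta:
  fixes K e \<epsilon> :: real
  assumes "0 \<le> K" "0 < e" "K < \<epsilon> * e"
  shows "\<bar>debate_adv K e / e - 1\<bar> < \<epsilon>"
proof -
  define S where "S = sqrt (K\<^sup>2 + e\<^sup>2)"
  have "e \<le> S" unfolding S_def by (rule real_le_rsqrt) simp
  have "S \<le> K + e" unfolding S_def using assms by (intro sqrt_sum_squares_le_add) auto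
  have "debate_adv K e / e - 1 = - ((K + e - S) / e)"
    using assms by (simp add: debate_adv_def S_def[symmetric] field_simps)
  moreover have "(K + e - S) / e \<le> K / e"
    using assms \<open>e \<le> S\<close> by (intro divide_right_mono) auto
  moreover have "K / e < \<epsilon>"
    using assms by (simp add: field_simps)
  moreover have "0 \<le> (K + e - S) / e"
    using assms \<open>S \<le> K + e\<close> by simp
  ultimately show ?thesis by linarith
qed

lemma debate_adv_small_eta_config:
  assumes "equal_angle_config VA VB k \<theta> th u v w \<alpha>"
    and "0 < K_star VA w" "0 < eta_val k th u v w" "eta_val k th u v w < \<epsilon> * K_star VA w"
  shows "\<bar>debate_adv (K_star VA w) (eta_val k th u v w)
           / (real k * \<alpha>\<^sup>2 * (tan (\<theta> / 2))\<^sup>2 / (2 * K_star VA w)) - 1\<bar> < \<epsilon>"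
proof -
  have "real k * \<alpha>\<^sup>2 * (tan (\<theta> / 2))\<^sup>2 = (eta_val k th u v w)\<^sup>2"
    using eta_val_equal_angle_config(1)[OF assms(1)] by (simp add: power_mult_distrib)
  then show ?thesis
    using debate_adv_small_eta[OF assms(2-4)] by simp
qed

lemma debate_adv_large_eta_config:
  assumes "equal_angle_config VA VB k \<theta> th u v w \<alpha>"
    and "0 < \<epsilon>" "0 < eta_val k th u v w" "1 / \<epsilon> * K_star VA w < eta_val k th u v w"
  shows "\<bar>debate_adv (K_star VA w) (eta_val k th u v w)
           / (\<bar>\<alpha>\<bar> * sqrt (real k) * tan (\<theta> / 2)) - 1\<bar> < \<epsilon>"
proof -
  have "0 \<le> K_star VA w" by (simp add: K_star_def)
  moreover have "K_star VA w < \<epsilon> * eta_val k th u v w"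
    using assms(2,4) by (simp add: field_simps)
  ultimately show ?thesis
    using debate_adv_large_eta[OF _ assms(3)] eta_val_equal_angle_config(1)[OF assms(1)] by simp
qed

theorem corollary2p11:
  fixes VA VB :: "('a::euclidean_space) set" and k :: nat and \<theta> :: real
    and th :: "nat \<Rightarrow> real" and u v :: "nat \<Rightarrow> 'a" and w :: 'a and \<alpha> :: real
  assumes "equal_angle_config VA VB k \<theta> th u v w \<alpha>"
  shows "eta_val k th u v w = \<bar>\<alpha>\<bar> * sqrt (real k) * \<bar>tan (\<theta> / 2)\<bar> \<and>
         (\<forall>\<epsilon>>0. \<exists>\<delta>>0. \<forall>(VA'::'a set) VB' k' \<theta>' th' u' v' w' \<alpha>'.
           equal_angle_config VA' VB' k' \<theta>' th' u' v' w' \<alpha>' \<and>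
           K_star VA' w' > 0 \<and> eta_val k' th' u' v' w' > 0 \<and>
           eta_val k' th' u' v' w' < \<delta> * K_star VA' w' \<longrightarrow>
           \<bar>debate_adv (K_star VA' w') (eta_val k' th' u' v' w')
              / (real k' * \<alpha>'\<^sup>2 * (tan (\<theta>' / 2))\<^sup>2 / (2 * K_star VA' w')) - 1\<bar> < \<epsilon>) \<and>
         (\<forall>\<epsilon>>0. \<exists>M>0. \<forall>(VA'::'a set) VB' k' \<theta>' th' u' v' w' \<alpha>'.
           equal_angle_config VA' VB' k' \<theta>' th' u' v' w' \<alpha>' \<and>
           eta_val k' th' u' v' w' > 0 \<and>
           eta_val k' th' u' v' w' > M * K_star VA' w' \<longrightarrow>
           \<bar>debate_adv (K_star VA' w') (eta_val k' th' u' v' w')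
              / (\<bar>\<alpha>'\<bar> * sqrt (real k') * tan (\<theta>' / 2)) - 1\<bar> < \<epsilon>)"
proof -
  have "0 < 1 / \<epsilon>" if "0 < \<epsilon>" for \<epsilon> :: real
    using that by simp
  then show ?thesis
    using eta_val_equal_angle_config[OF assms]
    by (intro conjI allI impI)
      (simp, blast intro: debate_adv_small_eta_config, blast intro: debate_adv_large_eta_config)
qed

end
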